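(* Let $p$ be an odd prime and $i$ an integer with $1\leq i<p-1$. For an integer $1\leq l\leq i+1$ set \[G_i(l)=\sum_{k=1}^l(-1)^{k-1}(k-1)!{l \brace k}_{\leq i}+\frac{p\cdot l!}{(l+p-1)!}{l+p-1 \brace p}_{\leq i}.\] Then $G_i(l)\in\mathbb{Z}_{(p)}$ with $G_i(l)\equiv -1\pmod p$ if $l=i+1$, and $G_i(l)\equiv 0\pmod p$ if $l\leq i$ (i.e. $G_i(l)=-1+O(p)$, resp. $O(p)$).
   Context: For integers $N\geq k\geq 0$ and $r\geq1$, the $r$-restricted Stirling number of the second kind is ${N \brace k}_{\leq r}=\sum \frac{N!}{\prod_{m=1}^{r} j_m!\,(m!)^{j_m}}$, the sum over $(j_1,\dots,j_r)\in\mathbb{N}^r$ with $\sum_m j_m=k$ and $\sum_m m j_m=N$; equivalently the number of partitions of an $N$-element set into $k$ nonempty blocks each of size at most $r$. $O(p)$ means an element of $p\mathbb{Z}_{(p)}$. *)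

theory Defs
  imports Complex_Main "HOL-Computational_Algebra.Primes" "HOL-Library.FuncSet"
begin

text \<open>r-restricted Stirling number of the second kind, via the defining formula:
  sum over (j_1,...,j_r) in N^r with sum j_m = k and sum m*j_m = N of
  N! / prod_{m=1..r} (j_m! (m!)^(j_m)).  Since m*j_m <= N, each j_m ranges in {0..N}.\<close>
definition rstirling :: "nat \<Rightarrow> nat \<Rightarrow> nat \<Rightarrow> rat" where
  "rstirling N k r =
     (\<Sum>j \<in> {j \<in> PiE {1..r} (\<lambda>_. {0..N}).
              (\<Sum>m=1..r. j m) = k \<and> (\<Sum>m=1..r. m * j m) = N}.
        of_nat (fact N) / (\<Prod>m=1..r. of_nat (fact (j m)) * of_nat (fact m) ^ (j m)))"

definition in_Zp :: "nat \<Rightarrow> rat \<Rightarrow> bool" where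
  "in_Zp p q \<longleftrightarrow> (\<exists>a b :: int. \<not> int p dvd b \<and> q = of_int a / of_int b)"

definition bigO_p :: "nat \<Rightarrow> rat \<Rightarrow> bool" where
  "bigO_p p q \<longleftrightarrow> in_Zp p (q / of_nat p)"

definition G_fun :: "nat \<Rightarrow> nat \<Rightarrow> nat \<Rightarrow> rat" where
  "G_fun p i l =
     (\<Sum>k=1..l. (-1) ^ (k - 1) * of_nat (fact (k - 1)) * rstirling l k i)
     + of_nat p * of_nat (fact l) / of_nat (fact (l + p - 1)) * rstirling (l + p - 1) p i"

end

(*
  The r-restricted Stirling numbers have the exponential generating function
  N!/k! [x^N] P^k, where P = x + x^2/2! + ... + x^r/r!.  Hence the first sum in G_i(l)
  is l! [x^l] log(1 + P), and the logarithm may be truncated after degree l because P has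
  no constant term.  Since P' = 1 + P - x^i/i!, the derivative of log(1 + P) is
  1 - x^i/(i! (1 + P)), which agrees with 1 - x^i/i! below degree i + 1; so the first sum
  is 1 for l = 1, -1 for l = i + 1 and 0 otherwise.

  The second summand is p l! times the sum of 1/prod_m (j_m! (m!)^j_m) over the block
  types j of partitions of an (l+p-1)-set into p blocks.  For l >= 2 every j_m is below p
  (j_m >= p would force l + p - 1 = p), so this is O(p).  For l = 1 it equals 1/(p-1)!,
  and 1 + 1/(p-1)! = O(p) is Wilson's theorem.
*)

theory Submission
  imports Defs "HOL-Computational_Algebra.Formal_Power_Series" "HOL-Number_Theory.Residues"
begin

unbundle fps_syntax

lemma in_Zp_of_int_divide: "\<not> int p dvd b \<Longrightarrow> in_Zp p (of_int a / of_int b)"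
  unfolding in_Zp_def by blast

lemma in_Zp_of_int:
  assumes "prime p"
  shows "in_Zp p (of_int a)"
  using in_Zp_of_int_divide[of p 1 a] prime_gt_1_nat[OF assms] by simp

lemma in_Zp_add:
  assumes "prime p" "in_Zp p x" "in_Zp p y"
  shows "in_Zp p (x + y)"
proof -
  obtain a b c d :: int where x: "\<not> int p dvd b" "x = of_int a / of_int b"
    and y: "\<not> int p dvd d" "y = of_int c / of_int d"
    using assms(2,3) unfolding in_Zp_def by blast
  have "b \<noteq> 0" "d \<noteq> 0"
    using x y by auto
  then have "x + y = of_int (a * d + c * b) / of_int (b * d)"
    using x y by (simp add: field_simps)
  moreover have "\<not> int p dvd b * d"
    using x y assms(1) by (simp add: prime_dvd_mult_iff)
  ultimately show ?thesis
    by (simp only: in_Zp_of_int_divide not_False_eq_True)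
qed

lemma in_Zp_mult:
  assumes "prime p" "in_Zp p x" "in_Zp p y"
  shows "in_Zp p (x * y)"
proof -
  obtain a b c d :: int where x: "\<not> int p dvd b" "x = of_int a / of_int b"
    and y: "\<not> int p dvd d" "y = of_int c / of_int d"
    using assms(2,3) unfolding in_Zp_def by blast
  have "x * y = of_int (a * c) / of_int (b * d)"
    using x y by simp
  moreover have "\<not> int p dvd b * d"
    using x y assms(1) by (simp add: prime_dvd_mult_iff)
  ultimately show ?thesis
    by (simp only: in_Zp_of_int_divide not_False_eq_True)
qed

lemma in_Zp_sum:
  assumes "prime p" "\<And>x. x \<in> A \<Longrightarrow> in_Zp p (f x)"
  shows "in_Zp p (\<Sum>x\<in>A. f x)"
  using assms(2) in_Zp_of_int[OF assms(1), of 0]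
  by (induction A rule: infinite_finite_induct) (auto intro: in_Zp_add[OF assms(1)])

lemma bigO_p_of_nat_mult_iff:
  assumes "p > 0"
  shows "bigO_p p (of_nat p * x) \<longleftrightarrow> in_Zp p x"
  using assms by (simp add: bigO_p_def)

lemma in_Zp_if_bigO_p:
  assumes "prime p" "bigO_p p x"
  shows "in_Zp p x"
proof -
  have "x = of_int (int p) * (x / of_nat p)"
    using prime_gt_0_nat[OF assms(1)] by simp
  then show ?thesis
    using assms in_Zp_mult in_Zp_of_int unfolding bigO_p_def by metis
qed

lemma bigO_p_one_plus_inverse_fact:
  assumes "prime p"
  shows "bigO_p p (1 + 1 / fact (p - 1))"
proof -
  have "\<not> p dvd fact (p - 1)"
    using prime_gt_0_nat[OF assms] by (simp add: prime_dvd_fact_iff[OF assms])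
  then have "\<not> int p dvd fact (p - 1)"
    by (metis int_dvd_int_iff of_nat_fact)
  obtain t where t: "fact (p - 1) + 1 = int p * t"
    using wilson_theorem[OF assms] unfolding cong_iff_dvd_diff by (auto elim!: dvdE)
  have "(1 + 1 / fact (p - 1) :: rat) = of_int (fact (p - 1) + 1) / of_int (fact (p - 1))"
    by (simp add: field_simps)
  also have "\<dots> = of_nat p * (of_int t / of_int (fact (p - 1)))"
    unfolding t by simp
  finally show ?thesis
    using in_Zp_of_int_divide[OF \<open>\<not> int p dvd fact (p - 1)\<close>] prime_gt_0_nat[OF assms]
    by (simp only: bigO_p_of_nat_mult_iff)
qed

definition block_types :: "nat set \<Rightarrow> nat \<Rightarrow> nat \<Rightarrow> (nat \<Rightarrow> nat) set" where
  "block_types M N k = {j \<in> extensional M. (\<Sum>m\<in>M. j m) = k \<and> (\<Sum>m\<in>M. m * j m) = N}"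

lemma block_types_subset_PiE:
  assumes "finite M"
  shows "block_types M N k \<subseteq> PiE M (\<lambda>_. {0..k})"
proof
  fix j assume "j \<in> block_types M N k"
  then have "j m \<le> k" if "m \<in> M" for m
    unfolding block_types_def using member_le_sum[OF that _ assms, of j] by auto
  with \<open>j \<in> block_types M N k\<close> show "j \<in> PiE M (\<lambda>_. {0..k})"
    unfolding block_types_def by (auto simp: PiE_iff)
qed

lemma finite_block_types: "finite M \<Longrightarrow> finite (block_types M N k)"
  by (rule finite_subset[OF block_types_subset_PiE]) (auto intro: finite_PiE)

lemma block_types_empty: "block_types {} N k = (if N = 0 \<and> k = 0 then {\<lambda>_. undefined} else {})"
  by (auto simp: block_types_def)

lemma sum_block_types_insert:
  fixes g :: "nat \<Rightarrow> nat \<Rightarrow> 'a::comm_semiring_1"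
  assumes "finite M" "m \<notin> M"
  shows "(\<Sum>j\<in>block_types (insert m M) N k. \<Prod>x\<in>insert m M. g x (j x))
       = (\<Sum>a | a \<le> k \<and> m * a \<le> N. g m a * (\<Sum>j\<in>block_types M (N - m * a) (k - a). \<Prod>x\<in>M. g x (j x)))"
proof -
  define A where "A = {a. a \<le> k \<and> m * a \<le> N}"
  define B where "B = (\<lambda>a. block_types M (N - m * a) (k - a))"
  have upd_M: "(\<Sum>x\<in>M. (J(m := a)) x) = (\<Sum>x\<in>M. J x)"
    "(\<Sum>x\<in>M. x * (J(m := a)) x) = (\<Sum>x\<in>M. x * J x)"
    "(\<Prod>x\<in>M. g x ((J(m := a)) x)) = (\<Prod>x\<in>M. g x (J x))" for J a
    using assms(2) by (auto intro!: sum.cong prod.cong)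
  have restrict_M: "(\<Sum>x\<in>M. restrict J M x) = (\<Sum>x\<in>M. J x)"
    "(\<Sum>x\<in>M. x * restrict J M x) = (\<Sum>x\<in>M. x * J x)"
    "(\<Prod>x\<in>M. g x (restrict J M x)) = (\<Prod>x\<in>M. g x (J x))" for J
    by (auto intro!: sum.cong prod.cong)
  have "(\<Sum>j\<in>block_types (insert m M) N k. \<Prod>x\<in>insert m M. g x (j x))
      = (\<Sum>(a, j)\<in>Sigma A B. g m a * (\<Prod>x\<in>M. g x (j x)))"
  proof (rule sum.reindex_bij_witness[where j = "\<lambda>j. (j m, restrict j M)" and i = "\<lambda>(a, j). j(m := a)"])
    fix j assume j: "j \<in> block_types (insert m M) N k"
    then show "(case (j m, restrict j M) of (a, j) \<Rightarrow> j(m := a)) = j"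
      unfolding block_types_def by (auto simp: extensional_def)
    show "(j m, restrict j M) \<in> Sigma A B"
      using j assms upd_M restrict_M unfolding A_def B_def block_types_def by auto
    show "(case (j m, restrict j M) of (a, j) \<Rightarrow> g m a * (\<Prod>x\<in>M. g x (j x)))
        = (\<Prod>x\<in>insert m M. g x (j x))"
      using assms restrict_M by simp
  next
    fix aj assume "aj \<in> Sigma A B"
    then obtain a j where aj: "aj = (a, j)" "a \<le> k" "m * a \<le> N" "j \<in> block_types M (N - m * a) (k - a)"
      unfolding A_def B_def by auto
    then show "(case aj of (a, j) \<Rightarrow> j(m := a)) \<in> block_types (insert m M) N k"
      using assms upd_M unfolding block_types_def by (auto simp: extensional_def)
    show "((case aj of (a, j) \<Rightarrow> j(m := a)) m, restrict (case aj of (a, j) \<Rightarrow> j(m := a)) M) = aj"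
      using aj assms unfolding block_types_def by (auto simp: extensional_def restrict_def)
  qed
  also have "\<dots> = (\<Sum>a\<in>A. g m a * (\<Sum>j\<in>B a. \<Prod>x\<in>M. g x (j x)))"
  proof -
    have "finite A"
      unfolding A_def by (rule finite_subset[of _ "{..k}"]) auto
    then show ?thesis
      using finite_block_types[OF assms(1)] unfolding B_def
      by (simp add: sum.Sigma sum_distrib_left)
  qed
  finally show ?thesis
    unfolding A_def B_def .
qed

lemma fps_monomial_power_mult_nth:
  fixes c :: "'a::comm_semiring_1"
  shows "((fps_const c * fps_X ^ m) ^ a * f) $ N = c ^ a * (if N < m * a then 0 else f $ (N - m * a))"
proof -
  have "(fps_const c * fps_X ^ m) ^ a * f = fps_const (c ^ a) * (fps_X ^ (m * a) * f)"
    by (simp only: power_mult_distrib power_mult fps_const_power mult.assoc)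
  then show ?thesis
    by (simp add: fps_X_power_mult_nth)
qed

lemma fps_sum_monomials_power_nth:
  fixes c :: "nat \<Rightarrow> 'a::field_char_0"
  assumes "finite M"
  shows "(\<Sum>m\<in>M. fps_const (c m) * fps_X ^ m) ^ k $ N
       = fact k * (\<Sum>j\<in>block_types M N k. \<Prod>m\<in>M. c m ^ j m / fact (j m))"
  using assms
proof (induction M arbitrary: N k rule: finite_induct)
  case empty
  then show ?case
    by (cases k) (auto simp: block_types_empty)
next
  case (insert m M)
  define Q where "Q = (\<Sum>m\<in>M. fps_const (c m) * fps_X ^ m)"
  define W where "W = (\<lambda>N k. \<Sum>j\<in>block_types M N k. \<Prod>m\<in>M. c m ^ j m / fact (j m))"
  have "(\<Sum>m\<in>insert m M. fps_const (c m) * fps_X ^ m) ^ k $ N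
      = (\<Sum>a\<le>k. of_nat (k choose a) * ((fps_const (c m) * fps_X ^ m) ^ a * Q ^ (k - a)) $ N)"
    using insert.hyps by (simp add: Q_def binomial_ring fps_sum_nth mult.assoc)
  also have "\<dots> = (\<Sum>a\<le>k. if m * a \<le> N then fact k * (c m ^ a / fact a * W (N - m * a) (k - a)) else 0)"
  proof (rule sum.cong[OF refl])
    fix a assume "a \<in> {..k}"
    then have binomial: "of_nat (k choose a) * fact (k - a) = (fact k / fact a :: 'a)"
      by (simp add: binomial_fact)
    have "of_nat (k choose a) * (x * (fact (k - a) * w)) = fact k * (x / fact a * w)" for x w :: 'a
    proof -
      have "of_nat (k choose a) * (x * (fact (k - a) * w)) = (of_nat (k choose a) * fact (k - a)) * x * w"
        by (simp only: ac_simps)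
      then show ?thesis
        unfolding binomial by simp
    qed
    then show "of_nat (k choose a) * ((fps_const (c m) * fps_X ^ m) ^ a * Q ^ (k - a)) $ N
        = (if m * a \<le> N then fact k * (c m ^ a / fact a * W (N - m * a) (k - a)) else 0)"
      unfolding fps_monomial_power_mult_nth Q_def insert.IH W_def
      by simp
  qed
  also have "\<dots> = fact k * (\<Sum>a | a \<le> k \<and> m * a \<le> N. c m ^ a / fact a * W (N - m * a) (k - a))"
  proof -
    have range: "{a. a \<le> k \<and> m * a \<le> N} = {a \<in> {..k}. m * a \<le> N}"
      by auto
    show ?thesis
      unfolding range sum_distrib_left sum.inter_filter[OF finite_atMost] by (intro sum.cong) auto
  qed
  also have "\<dots> = fact k * (\<Sum>j\<in>block_types (insert m M) N k. \<Prod>m\<in>insert m M. c m ^ j m / fact (j m))"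
    unfolding W_def sum_block_types_insert[OF insert.hyps, where g = "\<lambda>x y. c x ^ y / fact y"] ..
  finally show ?case .
qed

definition fps_expm1_trunc :: "nat \<Rightarrow> 'a::field_char_0 fps" where
  "fps_expm1_trunc r = (\<Sum>m=1..r. fps_const (1 / fact m) * fps_X ^ m)"

lemma rstirling_eq_sum_block_types:
  "rstirling N k r = (\<Sum>j\<in>block_types {1..r} N k. fact N / (\<Prod>m=1..r. fact (j m) * fact m ^ j m))"
proof -
  have "j m \<le> N" if "j \<in> block_types {1..r} N k" "m \<in> {1..r}" for j m
  proof -
    have "m * j m \<le> (\<Sum>m=1..r. m * j m)"
      using that(2) by (intro member_le_sum) auto
    then show ?thesis
      using that unfolding block_types_def by (auto intro: le_trans[of _ "m * j m"])
  qed
  then have "{j \<in> PiE {1..r} (\<lambda>_. {0..N}). (\<Sum>m=1..r. j m) = k \<and> (\<Sum>m=1..r. m * j m) = N}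
      = block_types {1..r} N k"
    unfolding block_types_def by (auto simp: PiE_iff)
  then show ?thesis
    unfolding rstirling_def by simp
qed

lemma rstirling_conv_fps: "rstirling N k r = fact N / fact k * (fps_expm1_trunc r ^ k) $ N"
proof -
  have "(fps_expm1_trunc r ^ k) $ N
      = fact k * (\<Sum>j\<in>block_types {1..r} N k. \<Prod>m=1..r. (1 / fact m) ^ j m / fact (j m) :: rat)"
    unfolding fps_expm1_trunc_def by (rule fps_sum_monomials_power_nth) simp
  then show ?thesis
    unfolding rstirling_eq_sum_block_types
    by (simp add: sum_distrib_left prod_dividef power_one_over field_simps)
qed

lemma fps_expm1_trunc_nth: "fps_expm1_trunc r $ n = (if 1 \<le> n \<and> n \<le> r then 1 / fact n else 0)"
  unfolding fps_expm1_trunc_def by (simp add: fps_sum_nth if_distrib[of "\<lambda>x. x / _"] sum.delta cong: if_cong)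

lemma of_nat_Suc_div_fact: "of_nat (Suc n) / fact (Suc n) = (1 / fact n :: 'a::field_char_0)"
  by (simp add: fact_Suc del: of_nat_Suc)

lemma fps_deriv_expm1_trunc:
  "fps_deriv (fps_expm1_trunc r) = 1 + fps_expm1_trunc r - fps_const (1 / fact r) * fps_X ^ r"
proof (rule fps_ext)
  fix n
  consider "n < r" | "n = r" | "r < n"
    by linarith
  then show "fps_deriv (fps_expm1_trunc r) $ n
      = (1 + fps_expm1_trunc r - fps_const (1 / fact r) * fps_X ^ r) $ n"
    by cases (simp_all add: fps_expm1_trunc_nth of_nat_Suc_div_fact Suc_le_eq del: of_nat_Suc fact_Suc)
qed

lemma rstirling_diag:
  assumes "1 \<le> r"
  shows "rstirling n n r = 1"
proof -
  have "(fps_expm1_trunc r ^ n) $ n = (fps_expm1_trunc r $ 1 :: rat) ^ n"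
    by (rule startsby_zero_power_nth_same) (simp add: fps_expm1_trunc_nth)
  then show ?thesis
    using assms by (simp add: rstirling_conv_fps fps_expm1_trunc_nth)
qed

definition fps_ln1p_trunc :: "nat \<Rightarrow> 'a::field_char_0 fps \<Rightarrow> 'a fps" where
  "fps_ln1p_trunc n f = (\<Sum>k=1..n. fps_const ((-1) ^ (k - 1) / of_nat k) * f ^ k)"

lemma fps_deriv_ln1p_trunc_term:
  fixes f :: "'a::field_char_0 fps"
  shows "fps_deriv (fps_const ((-1) ^ k / of_nat (Suc k)) * f ^ Suc k) = fps_deriv f * (- f) ^ k"
proof -
  have "fps_deriv (fps_const ((-1) ^ k / of_nat (Suc k)) * f ^ Suc k)
      = (fps_const ((-1) ^ k / of_nat (Suc k)) * of_nat (Suc k)) * (fps_deriv f * f ^ k)"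
    by (simp only: fps_deriv_mult_const_left fps_deriv_power' diff_Suc_1 mult.assoc)
  also have "fps_const ((-1) ^ k / of_nat (Suc k)) * of_nat (Suc k) = (fps_const ((-1) ^ k) :: 'a fps)"
    by (simp only: fps_of_nat[symmetric] fps_const_mult) (simp del: of_nat_Suc)
  also have "fps_const ((-1) ^ k) = (- 1 :: 'a fps) ^ k"
    by (simp only: fps_const_power [symmetric] fps_const_neg [symmetric] fps_const_1_eq_1)
  finally show ?thesis
    by (simp only: power_minus[of f] ac_simps)
qed

lemma fps_deriv_ln1p_trunc:
  fixes f :: "'a::field_char_0 fps"
  shows "(1 + f) * fps_deriv (fps_ln1p_trunc n f) = fps_deriv f * (1 - (- f) ^ n)"
proof -
  have "fps_deriv (fps_ln1p_trunc n f) = (\<Sum>k<n. fps_deriv f * (- f) ^ k)"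
    unfolding fps_ln1p_trunc_def fps_deriv_sum
    by (simp only: One_nat_def sum.atLeast1_atMost_eq diff_Suc_Suc diff_zero fps_deriv_ln1p_trunc_term)
  then show ?thesis
    by (simp only: one_diff_power_eq[of "- f" n] diff_minus_eq_add sum_distrib_left[symmetric] ac_simps)
qed

lemma fps_nth_eq_if_mult_nth_eq:
  fixes g a b :: "'a::field fps"
  assumes "g $ 0 \<noteq> 0" and "\<And>e. e < n \<Longrightarrow> (g * a) $ e = (g * b) $ e" and "d < n"
  shows "a $ d = b $ d"
proof -
  have "(inverse g * (g * a)) $ d = (inverse g * (g * b)) $ d"
    unfolding fps_mult_nth[of "inverse g"] using assms(2,3) by (intro sum.cong) auto
  then show ?thesis
    using inverse_mult_eq_1[OF assms(1)] by (simp add: mult.assoc[symmetric])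
qed

lemma fps_deriv_ln1p_trunc_expm1_trunc_nth:
  assumes "d < n" "d \<le> r"
  shows "fps_deriv (fps_ln1p_trunc n (fps_expm1_trunc r)) $ d
       = (1 - fps_const (1 / fact r) * fps_X ^ r :: 'a::field_char_0 fps) $ d"
proof -
  define f :: "'a fps" where "f = fps_expm1_trunc r"
  define c :: "'a fps" where "c = fps_const (1 / fact r) * fps_X ^ r"
  have f0: "f $ 0 = 0"
    by (simp add: f_def fps_expm1_trunc_nth)
  have agree: "((1 + f) * fps_deriv (fps_ln1p_trunc n f)) $ e = ((1 + f) * (1 - c)) $ e"
    if "e < min n (Suc r)" for e
  proof -
    have "(fps_deriv f * (- f) ^ n) $ e = 0"
      unfolding fps_mult_nth using that startsby_zero_power_prefix[of "- f" n] f0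
      by (intro sum.neutral) auto
    moreover have "(c * f) $ e = 0"
      unfolding c_def using that f0 by (simp add: mult.assoc fps_X_power_mult_nth)
    moreover have "fps_deriv f = (1 + f) * (1 - c) + c * f"
      unfolding f_def c_def fps_deriv_expm1_trunc by (simp add: algebra_simps)
    ultimately show ?thesis
      unfolding fps_deriv_ln1p_trunc right_diff_distrib mult_1_right by simp
  qed
  show ?thesis
    unfolding f_def[symmetric] c_def[symmetric]
  proof (rule fps_nth_eq_if_mult_nth_eq[where n = "min n (Suc r)"])
    show "(1 + f) $ 0 \<noteq> 0"
      using f0 by simp
  qed (use assms agree in simp_all)
qed

lemma sum_alternating_rstirling:
  assumes "1 \<le> l" "l \<le> r + 1"
  shows "(\<Sum>k=1..l. (-1) ^ (k - 1) * of_nat (fact (k - 1)) * rstirling l k r)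
       = (if l = 1 then 1 else 0) - (if l = r + 1 then 1 else 0)"
proof -
  define L :: "rat fps" where "L = fps_ln1p_trunc l (fps_expm1_trunc r)"
  have "(\<Sum>k=1..l. (-1) ^ (k - 1) * of_nat (fact (k - 1)) * rstirling l k r) = fact l * L $ l"
    unfolding L_def fps_ln1p_trunc_def fps_sum_nth sum_distrib_left rstirling_conv_fps
  proof (rule sum.cong[OF refl])
    fix k :: nat assume "k \<in> {1..l}"
    then have "k > 0" "fact k = (of_nat k * fact (k - 1) :: rat)"
      by (simp_all add: fact_reduce)
    then show "(-1) ^ (k - 1) * of_nat (fact (k - 1)) * (fact l / fact k * (fps_expm1_trunc r ^ k) $ l)
        = fact l * (fps_const ((-1) ^ (k - 1) / of_nat k) * fps_expm1_trunc r ^ k :: rat fps) $ l"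
      by (simp add: field_simps)
  qed
  also have "fact l * L $ l = fact (l - 1) * fps_deriv L $ (l - 1)"
    using assms(1) by (cases l) (simp_all add: fact_Suc del: of_nat_Suc)
  also have "fps_deriv L $ (l - 1) = (1 - fps_const (1 / fact r) * fps_X ^ r) $ (l - 1)"
    unfolding L_def using assms by (intro fps_deriv_ln1p_trunc_expm1_trunc_nth) auto
  also have "fact (l - 1) * \<dots> = (if l = 1 then 1 else 0) - (if l = r + 1 then 1 else 0)"
    using assms by (cases "l = r + 1") (simp_all, linarith)
  finally show ?thesis .
qed

lemma block_types_nth_less:
  assumes "j \<in> block_types M N k" "finite M" "0 \<notin> M" "m \<in> M" "N < 2 * k" "N \<noteq> k"
  shows "j m < k"
proof (rule ccontr)
  assume "\<not> j m < k"
  have sums: "j m + (\<Sum>x\<in>M - {m}. j x) = k" "m * j m + (\<Sum>x\<in>M - {m}. x * j x) = N"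
    using assms(1,2,4) by (simp_all add: block_types_def sum.remove)
  with \<open>\<not> j m < k\<close> have jm: "j m = k" and "(\<Sum>x\<in>M - {m}. j x) = 0"
    by auto
  then have "\<forall>x\<in>M - {m}. j x = 0"
    using assms(2) by (simp add: sum_eq_0_iff)
  then have "N = m * k"
    using sums(2) jm by simp
  moreover from this have "m = 1"
    using assms(3-5) by (cases m) auto
  ultimately show False
    using assms(6) by simp
qed

lemma not_prime_dvd_prod_fact:
  fixes p :: nat
  assumes "prime p" "finite M" "\<And>m. m \<in> M \<Longrightarrow> m < p \<and> j m < p"
  shows "\<not> p dvd (\<Prod>m\<in>M. fact (j m) * fact m ^ j m)"
proof
  assume "p dvd (\<Prod>m\<in>M. fact (j m) * fact m ^ j m)"
  then obtain m where "m \<in> M" "p dvd fact (j m) \<or> p dvd fact m ^ j m"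
    using assms(1,2) by (auto simp: prime_dvd_prod_iff prime_dvd_mult_iff)
  then show False
    using assms(3)[of m] prime_dvd_power[OF assms(1)] prime_dvd_fact_iff[OF assms(1)] by (meson not_le)
qed

lemma in_Zp_rstirling_div_fact:
  assumes "prime p" "r < p" "p < N" "N < 2 * p"
  shows "in_Zp p (rstirling N p r / fact N)"
proof -
  have "rstirling N p r / fact N
      = (\<Sum>j\<in>block_types {1..r} N p. of_int 1 / of_int (int (\<Prod>m=1..r. fact (j m) * fact m ^ j m)))"
    unfolding rstirling_eq_sum_block_types sum_divide_distrib by simp
  also have "in_Zp p \<dots>"
  proof (rule in_Zp_sum[OF assms(1)])
    fix j assume "j \<in> block_types {1..r} N p"
    then have "j m < p" if "m \<in> {1..r}" for m
      using that assms(3,4) by (intro block_types_nth_less) auto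
    then have "\<not> p dvd (\<Prod>m=1..r. fact (j m) * fact m ^ j m)"
      using assms(1,2) by (intro not_prime_dvd_prod_fact) auto
    then have "\<not> int p dvd int (\<Prod>m=1..r. fact (j m) * fact m ^ j m)"
      by (simp only: int_dvd_int_iff not_False_eq_True)
    then show "in_Zp p (of_int 1 / of_int (int (\<Prod>m=1..r. fact (j m) * fact m ^ j m)))"
      by (rule in_Zp_of_int_divide)
  qed
  finally show ?thesis .
qed

theorem proposition3p17:
  fixes p i l :: nat
  assumes "prime p" and "odd p"
    and "1 \<le> i" and "i < p - 1"
    and "1 \<le> l" and "l \<le> i + 1"
  shows "in_Zp p (G_fun p i l)
       \<and> (l = i + 1 \<longrightarrow> bigO_p p (G_fun p i l + 1))
       \<and> (l \<le> i \<longrightarrow> bigO_p p (G_fun p i l))"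
proof -
  define N where "N = l + p - 1"
  define S where "S = of_nat p * (fact l * (rstirling N p i / fact N))"
  have p: "p > 0"
    using assms(1) prime_gt_0_nat by blast
  have G: "G_fun p i l = (if l = 1 then 1 else 0) - (if l = i + 1 then 1 else 0) + S"
    unfolding G_fun_def sum_alternating_rstirling[OF assms(5,6)] S_def N_def by simp
  show ?thesis
  proof (cases "l = 1")
    case True
    then have "S = 1 / fact (p - 1)"
      using p assms(3) by (simp add: S_def N_def rstirling_diag fact_reduce[of p])
    then have "bigO_p p (G_fun p i l)"
      using G True assms(3) bigO_p_one_plus_inverse_fact[OF assms(1)] by simp
    then show ?thesis
      using True assms(3) in_Zp_if_bigO_p[OF assms(1)] by simp
  next
    case False
    then have "in_Zp p (fact l * (rstirling N p i / fact N))"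
      using assms p unfolding N_def
      by (intro in_Zp_mult in_Zp_rstirling_div_fact in_Zp_of_int[of p "fact l", simplified]) auto
    then have "bigO_p p S"
      unfolding S_def using bigO_p_of_nat_mult_iff[OF p] by blast
    moreover from this have "in_Zp p (S + of_int (- (if l = i + 1 then 1 else 0)))"
      by (intro in_Zp_add in_Zp_if_bigO_p in_Zp_of_int assms(1))
    moreover have "G_fun p i l = S + of_int (- (if l = i + 1 then 1 else 0))"
      using G False by simp
    ultimately show ?thesis
      by auto
  qed
qed

end
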